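(* Let $\Pi$ be a random permutation with values in $S_n$. Then $\Pi$ is $L$-decomposable if and only if, for every consecutive partition $\underline{\kappa}=(\underline{\kappa}_1,\ldots,\underline{\kappa}_{j+1})$ of $\{1,\ldots,n\}$, the ordered marginals $\Pi_{\underline{\kappa}_1},\ldots,\Pi_{\underline{\kappa}_{j+1}}$ are conditionally independent given the vector of unordered marginals $\{\Pi_{\underline{\kappa}}\}$; that is, for every $\pi\in S_n$ with $P(\{\Pi_{\underline{\kappa}}\}=\{\pi_{\underline{\kappa}}\})>0$, \[ P(\Pi=\pi \mid \{\Pi_{\underline{\kappa}}\}=\{\pi_{\underline{\kappa}}\})=\prod_{i=1}^{j+1} P(\Pi_{\underline{\kappa}_i}=\pi_{\underline{\kappa}_i}\mid \{\Pi_{\underline{\kappa}}\}=\{\pi_{\underline{\kappa}}\}). \]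
   Context: $S_n$ is the group of permutations of $\{1,\ldots,n\}$; $\Pi$ is a random element of $S_n$ with distribution $p(\pi)=P(\Pi=\pi)$. For a vector $v$ and $i\le j$, write $v\{i:j\}=\{v(i),\ldots,v(j)\}$ (unordered set; empty if $j<i$) and $v(i:j)=(v(i),\ldots,v(j))$ (ordered tuple). $\Pi$ (or $p$) is called $L$-decomposable if for every $2\le k\le n-2$ and every $\pi\in S_n$, $P(\Pi(k+1)=\pi(k+1)\mid \Pi(1:k)=\pi(1:k)) = P(\Pi(k+1)=\pi(k+1)\mid \Pi\{1:k\}=\pi\{1:k\})$ whenever the left-hand side is defined (equivalently, the random sets $\Pi\{1:k\}$, $k=1,\dots,n$, form a Markov chain). A consecutive partition is determined by sections $0=\kappa_0<\kappa_1<\cdots<\kappa_j<\kappa_{j+1}=n$ via $\underline{\kappa}_i=\{\kappa_{i-1}+1,\ldots,\kappa_i\}$. For $\pi\in S_n$, the ordered marginal is $\pi_{\underline{\kappa}_i}=\pi(\kappa_{i-1}+1:\kappa_i)$, the unordered marginal is $\{\pi_{\underline{\kappa}_i}\}=\pi\{\kappa_{i-1}+1:\kappa_i\}$, and $\{\pi_{\underline{\kappa}}\}=(\{\pi_{\underline{\kappa}_1}\},\ldots,\{\pi_{\underline{\kappa}_{j+1}}\})$. *)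

theory Defs
  imports "HOL-Probability.Probability" "HOL-Combinatorics.Permutations"
begin

(* A random permutation of {1..n} is a pmf M on functions nat => nat with
   set_pmf M contained in {pi. pi permutes {1..n}}. *)

definition cond_prob :: "'a pmf \<Rightarrow> 'a set \<Rightarrow> 'a set \<Rightarrow> real" where
  "cond_prob M A B = measure_pmf.prob M (A \<inter> B) / measure_pmf.prob M B"

definition ord_event :: "(nat \<Rightarrow> nat) \<Rightarrow> nat \<Rightarrow> nat \<Rightarrow> (nat \<Rightarrow> nat) set" where
  "ord_event \<pi> a b = {\<sigma>. \<forall>m\<in>{a..b}. \<sigma> m = \<pi> m}"

definition set_event :: "(nat \<Rightarrow> nat) \<Rightarrow> nat \<Rightarrow> nat \<Rightarrow> (nat \<Rightarrow> nat) set" where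
  "set_event \<pi> a b = {\<sigma>. \<sigma> ` {a..b} = \<pi> ` {a..b}}"

definition L_decomposable :: "nat \<Rightarrow> (nat \<Rightarrow> nat) pmf \<Rightarrow> bool" where
  "L_decomposable n M \<longleftrightarrow>
     (\<forall>k \<pi>. 2 \<le> k \<and> k \<le> n - 2 \<and> \<pi> permutes {1..n}
        \<and> measure_pmf.prob M (ord_event \<pi> 1 k) > 0 \<longrightarrow>
        cond_prob M {\<sigma>. \<sigma> (k+1) = \<pi> (k+1)} (ord_event \<pi> 1 k)
        = cond_prob M {\<sigma>. \<sigma> (k+1) = \<pi> (k+1)} (set_event \<pi> 1 k))"

definition consec_sections :: "nat \<Rightarrow> nat \<Rightarrow> (nat \<Rightarrow> nat) \<Rightarrow> bool" where
  "consec_sections n j \<kappa> \<longleftrightarrow>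
     \<kappa> 0 = 0 \<and> \<kappa> (Suc j) = n \<and> (\<forall>i\<le>j. \<kappa> i < \<kappa> (Suc i))"

definition unord_marg_event :: "nat \<Rightarrow> (nat \<Rightarrow> nat) \<Rightarrow> (nat \<Rightarrow> nat) \<Rightarrow> (nat \<Rightarrow> nat) set" where
  "unord_marg_event j \<kappa> \<pi> =
     (\<Inter>i\<in>{1..Suc j}. set_event \<pi> (\<kappa> (i - 1) + 1) (\<kappa> i))"

end

theory Submission
  imports Defs
begin

(* Both directions rest on one exchange principle (splice_sum, prob_splice_independent): if a
   finite set R of functions is closed under splicing in the values on a set B, and the weight p
   satisfies p s * p t = p s' * p t' for all s, t in R and the spliced pair s', t', then under p
   restricted to R every event determined by the values off B is independent of every event
   determined by the values on B.

   Forward direction: by the chain rule an L-decomposable pmf is a product of factors depending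
   only on the unordered prefix {1..m} and the next value (pmf_chain_rule); such a product obeys
   the exchange identity for a block shared by two permutations with the same unordered marginals
   (pmf_splice_swap).  The exchange principle then separates the blocks one at a time
   (prefix_block_independent, prefix_mass_factorization).
   Backward direction: the factorization for the two blocks {1..k}, {k+1..n} writes the pmf as a
   product of a first-block and a second-block factor, which yields the exchange identity for
   {k+1..n} (product_form_swap, two_blocks_exchange); the exchange principle then makes Pi(1:k)
   and Pi(k+1) independent given Pi{1:k}, which is L-decomposability at k. *)

definition perms :: "nat \<Rightarrow> (nat \<Rightarrow> nat) set" where
  "perms n = {\<sigma>. \<sigma> permutes {1..n}}"

definition agree :: "'a set \<Rightarrow> ('a \<Rightarrow> 'b) \<Rightarrow> ('a \<Rightarrow> 'b) set" where
  "agree I \<sigma> = {\<tau>. \<forall>x\<in>I. \<tau> x = \<sigma> x}"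

definition splice :: "'a set \<Rightarrow> ('a \<Rightarrow> 'b) \<Rightarrow> ('a \<Rightarrow> 'b) \<Rightarrow> 'a \<Rightarrow> 'b" where
  "splice B \<sigma> \<tau> = (\<lambda>x. if x \<in> B then \<tau> x else \<sigma> x)"

lemma ord_event_agree: "ord_event \<sigma> a b = agree {a..b} \<sigma>"
  unfolding ord_event_def agree_def by auto

lemma agree_Un: "agree (I \<union> J) \<sigma> = agree I \<sigma> \<inter> agree J \<sigma>"
  unfolding agree_def by auto

lemma splice_apply: "splice B \<sigma> \<tau> x = (if x \<in> B then \<tau> x else \<sigma> x)"
  by (simp add: splice_def)

lemma agree_splice_outside: "I \<inter> B = {} \<Longrightarrow> agree I (splice B \<sigma> \<tau>) = agree I \<sigma>"
  by (auto simp: agree_def splice_apply)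

lemma agree_splice_inside: "agree B (splice B \<sigma> \<tau>) = agree B \<tau>"
  by (auto simp: agree_def splice_apply)

lemma splice_splice: "splice B (splice B \<sigma> \<tau>) (splice B \<tau> \<sigma>) = \<sigma>"
  by (auto simp: splice_def)

(* The exchange principle: the splicing involution on pairs maps (R \<inter> E \<inter> F) \<times> R onto
   (R \<inter> E) \<times> (R \<inter> F) and preserves the product weight, so under p the events E (determined
   off B) and F (determined on B) are independent within R. *)
lemma splice_sum:
  fixes p :: "('a \<Rightarrow> 'b) \<Rightarrow> real"
  assumes "finite R"
    and closed: "\<And>\<sigma> \<tau>. \<sigma> \<in> R \<Longrightarrow> \<tau> \<in> R \<Longrightarrow> splice B \<sigma> \<tau> \<in> R"
    and swap: "\<And>\<sigma> \<tau>. \<sigma> \<in> R \<Longrightarrow> \<tau> \<in> R \<Longrightarrow>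
                  p \<sigma> * p \<tau> = p (splice B \<sigma> \<tau>) * p (splice B \<tau> \<sigma>)"
    and E: "\<And>\<sigma> \<tau>. \<sigma> \<in> E \<Longrightarrow> (\<forall>x. x \<notin> B \<longrightarrow> \<tau> x = \<sigma> x) \<Longrightarrow> \<tau> \<in> E"
    and F: "\<And>\<sigma> \<tau>. \<sigma> \<in> F \<Longrightarrow> (\<forall>x\<in>B. \<tau> x = \<sigma> x) \<Longrightarrow> \<tau> \<in> F"
  shows "(\<Sum>\<tau>\<in>R \<inter> E \<inter> F. p \<tau>) * (\<Sum>\<tau>\<in>R. p \<tau>)
       = (\<Sum>\<tau>\<in>R \<inter> E. p \<tau>) * (\<Sum>\<tau>\<in>R \<inter> F. p \<tau>)"
proof -
  define f :: "(('a \<Rightarrow> 'b) \<times> ('a \<Rightarrow> 'b)) \<Rightarrow> _"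
    where "f = (\<lambda>(\<sigma>, \<tau>). (splice B \<sigma> \<tau>, splice B \<tau> \<sigma>))"
  have involution: "f (f x) = x" for x
    unfolding f_def by (cases x) (simp add: splice_splice)
  have in_E: "splice B \<sigma> \<tau> \<in> E" if "\<sigma> \<in> E" for \<sigma> \<tau>
    using E[OF that] by (simp add: splice_def)
  have in_F: "splice B \<sigma> \<tau> \<in> F" if "\<tau> \<in> F" for \<sigma> \<tau>
    using F[OF that] by (simp add: splice_def)
  have bij: "bij_betw f ((R \<inter> E \<inter> F) \<times> R) ((R \<inter> E) \<times> (R \<inter> F))"
  proof (rule bij_betw_byWitness[where f' = f])
    show "f ` ((R \<inter> E \<inter> F) \<times> R) \<subseteq> (R \<inter> E) \<times> (R \<inter> F)"
      using closed in_E in_F unfolding f_def by auto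
    show "f ` ((R \<inter> E) \<times> (R \<inter> F)) \<subseteq> (R \<inter> E \<inter> F) \<times> R"
      using closed in_E in_F unfolding f_def by auto
  qed (use involution in auto)
  let ?q = "\<lambda>(\<sigma>, \<tau>). p \<sigma> * p \<tau>"
  have "(\<Sum>\<tau>\<in>R \<inter> E \<inter> F. p \<tau>) * (\<Sum>\<tau>\<in>R. p \<tau>) = (\<Sum>x\<in>(R \<inter> E \<inter> F) \<times> R. ?q x)"
    by (simp add: sum_product sum.cartesian_product)
  also have "\<dots> = (\<Sum>x\<in>(R \<inter> E \<inter> F) \<times> R. ?q (f x))"
    by (rule sum.cong) (auto simp: f_def swap)
  also have "\<dots> = (\<Sum>x\<in>(R \<inter> E) \<times> (R \<inter> F). ?q x)"
    using sum.reindex_bij_betw[OF bij, of ?q] by simp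
  also have "\<dots> = (\<Sum>\<tau>\<in>R \<inter> E. p \<tau>) * (\<Sum>\<tau>\<in>R \<inter> F. p \<tau>)"
    by (simp add: sum_product sum.cartesian_product)
  finally show ?thesis .
qed

lemma product_form_swap:
  fixes p f g :: "('a \<Rightarrow> 'b) \<Rightarrow> real"
  assumes "Z \<noteq> 0"
    and closed: "\<And>\<sigma> \<tau>. \<sigma> \<in> R \<Longrightarrow> \<tau> \<in> R \<Longrightarrow> splice B \<sigma> \<tau> \<in> R"
    and product: "\<And>\<rho>. \<rho> \<in> R \<Longrightarrow> p \<rho> * Z = f \<rho> * g \<rho>"
    and f: "\<And>\<rho> \<rho>'. f (splice B \<rho> \<rho>') = f \<rho>" and g: "\<And>\<rho> \<rho>'. g (splice B \<rho> \<rho>') = g \<rho>'"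
    and "\<sigma> \<in> R" "\<tau> \<in> R"
  shows "p \<sigma> * p \<tau> = p (splice B \<sigma> \<tau>) * p (splice B \<tau> \<sigma>)"
proof -
  let ?\<sigma>' = "splice B \<sigma> \<tau>" and ?\<tau>' = "splice B \<tau> \<sigma>"
  have "(p \<sigma> * p \<tau>) * Z\<^sup>2 = (p \<sigma> * Z) * (p \<tau> * Z)"
    by (simp add: power2_eq_square ac_simps)
  also have "\<dots> = (f \<sigma> * g \<sigma>) * (f \<tau> * g \<tau>)"
    using product assms(6,7) by simp
  also have "\<dots> = (f ?\<sigma>' * g ?\<sigma>') * (f ?\<tau>' * g ?\<tau>')"
    by (simp add: f g ac_simps)
  also have "\<dots> = (p ?\<sigma>' * Z) * (p ?\<tau>' * Z)"
    using product closed assms(6,7) by simp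
  also have "\<dots> = (p ?\<sigma>' * p ?\<tau>') * Z\<^sup>2"
    by (simp add: power2_eq_square ac_simps)
  finally show ?thesis
    using \<open>Z \<noteq> 0\<close> by simp
qed

lemma finite_perms [simp]: "finite (perms n)"
  unfolding perms_def by (rule finite_permutations) simp

lemma prob_eq_sum:
  assumes "set_pmf M \<subseteq> perms n"
  shows "measure_pmf.prob M E = (\<Sum>\<sigma>\<in>E \<inter> perms n. pmf M \<sigma>)"
proof -
  have "E \<inter> perms n \<inter> set_pmf M = E \<inter> set_pmf M"
    using assms by auto
  then have "measure_pmf.prob M E = measure_pmf.prob M (E \<inter> perms n)"
    by (metis measure_Int_set_pmf)
  also have "\<dots> = (\<Sum>\<sigma>\<in>E \<inter> perms n. pmf M \<sigma>)"
    by (rule measure_measure_pmf_finite) simp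
  finally show ?thesis .
qed

lemma prob_cong_perms:
  assumes "set_pmf M \<subseteq> perms n" "A \<inter> perms n = B \<inter> perms n"
  shows "measure_pmf.prob M A = measure_pmf.prob M B"
  using assms by (simp add: prob_eq_sum)

lemma splice_image_disjoint: "T \<inter> B = {} \<Longrightarrow> splice B \<sigma> \<tau> ` T = \<sigma> ` T"
  by (auto simp: splice_def image_def)

lemma splice_image_subset: "T \<subseteq> B \<Longrightarrow> splice B \<sigma> \<tau> ` T = \<tau> ` T"
  by (auto simp: splice_def image_def)

lemma splice_image_superset:
  assumes "B \<subseteq> T" "\<sigma> ` B = \<tau> ` B"
  shows "splice B \<sigma> \<tau> ` T = \<sigma> ` T"
proof -
  have "splice B \<sigma> \<tau> ` T = splice B \<sigma> \<tau> ` (T - B) \<union> splice B \<sigma> \<tau> ` B"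
    using assms(1) by blast
  also have "\<dots> = \<sigma> ` (T - B) \<union> \<sigma> ` B"
    using assms(2) splice_image_disjoint[of "T - B" B \<sigma> \<tau>] splice_image_subset[of B B \<sigma> \<tau>]
    by auto
  also have "\<dots> = \<sigma> ` T"
    using assms(1) by blast
  finally show ?thesis .
qed

lemma splice_perms:
  assumes "\<sigma> \<in> perms n" "\<tau> \<in> perms n" "B \<subseteq> {1..n}" "\<sigma> ` B = \<tau> ` B"
  shows "splice B \<sigma> \<tau> \<in> perms n"
proof -
  have \<sigma>: "\<sigma> permutes {1..n}"
    using assms(1) unfolding perms_def by simp
  let ?f = "splice B \<sigma> \<tau>"
  have image: "?f ` {1..n} = {1..n}"
    using splice_image_superset[OF assms(3,4)] permutes_image[OF \<sigma>] by simp
  then have "inj_on ?f {1..n}"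
    by (intro eq_card_imp_inj_on) auto
  with image have "bij_betw ?f {1..n} {1..n}"
    by (simp add: bij_betw_def)
  moreover have "?f x = x" if "x \<notin> {1..n}" for x
    using that assms(3) permutes_not_in[OF \<sigma>] unfolding splice_def by auto
  ultimately show ?thesis
    unfolding perms_def by (auto intro: bij_imp_permutes)
qed

lemma perms_eq_on_domain:
  assumes "\<sigma> \<in> perms n" "\<tau> \<in> perms n" "\<forall>x\<in>{1..n}. \<sigma> x = \<tau> x"
  shows "\<sigma> = \<tau>"
proof
  fix x show "\<sigma> x = \<tau> x"
    using assms permutes_not_in[of \<sigma> "{1..n}" x] permutes_not_in[of \<tau> "{1..n}" x]
    unfolding perms_def by (cases "x \<in> {1..n}") auto
qed

lemma agree_all_perms: "\<sigma> \<in> perms n \<Longrightarrow> agree {1..n} \<sigma> \<inter> perms n = {\<sigma>}"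
  using perms_eq_on_domain unfolding agree_def by auto

lemma perms_image_suffix:
  assumes "\<sigma> \<in> perms n" "\<tau> \<in> perms n" "\<sigma> ` {1..k} = \<tau> ` {1..k}"
  shows "\<sigma> ` {k+1..n} = \<tau> ` {k+1..n}"
proof -
  have suffix: "f ` {k+1..n} = {1..n} - f ` {1..k}" if "f \<in> perms n" for f
  proof -
    have f: "f permutes {1..n}"
      using that unfolding perms_def by simp
    have "{k+1..n} = {1..n} - {1..k}"
      by auto
    then show ?thesis
      using permutes_inj[OF f] permutes_image[OF f] by (simp add: image_set_diff)
  qed
  show ?thesis
    using suffix[OF assms(1)] suffix[OF assms(2)] assms(3) by simp
qed

lemma prob_splice_independent:
  assumes supp: "set_pmf M \<subseteq> perms n"
    and closed: "\<And>\<sigma> \<tau>. \<sigma> \<in> U \<inter> perms n \<Longrightarrow> \<tau> \<in> U \<inter> perms n \<Longrightarrow> splice B \<sigma> \<tau> \<in> U \<inter> perms n"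
    and swap: "\<And>\<sigma> \<tau>. \<sigma> \<in> U \<inter> perms n \<Longrightarrow> \<tau> \<in> U \<inter> perms n \<Longrightarrow>
                 pmf M \<sigma> * pmf M \<tau> = pmf M (splice B \<sigma> \<tau>) * pmf M (splice B \<tau> \<sigma>)"
    and E: "\<And>\<sigma> \<tau>. \<sigma> \<in> E \<Longrightarrow> (\<forall>x. x \<notin> B \<longrightarrow> \<tau> x = \<sigma> x) \<Longrightarrow> \<tau> \<in> E"
    and F: "\<And>\<sigma> \<tau>. \<sigma> \<in> F \<Longrightarrow> (\<forall>x\<in>B. \<tau> x = \<sigma> x) \<Longrightarrow> \<tau> \<in> F"
  shows "measure_pmf.prob M (E \<inter> F \<inter> U) * measure_pmf.prob M U
       = measure_pmf.prob M (E \<inter> U) * measure_pmf.prob M (F \<inter> U)"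
proof -
  let ?R = "U \<inter> perms n"
  have "(\<Sum>\<tau>\<in>?R \<inter> E \<inter> F. pmf M \<tau>) * (\<Sum>\<tau>\<in>?R. pmf M \<tau>)
      = (\<Sum>\<tau>\<in>?R \<inter> E. pmf M \<tau>) * (\<Sum>\<tau>\<in>?R \<inter> F. pmf M \<tau>)"
    by (rule splice_sum[OF _ closed swap E F]) auto
  moreover have "E \<inter> F \<inter> U \<inter> perms n = ?R \<inter> E \<inter> F" "E \<inter> U \<inter> perms n = ?R \<inter> E"
    "F \<inter> U \<inter> perms n = ?R \<inter> F"
    by auto
  ultimately show ?thesis
    by (simp add: prob_eq_sum[OF supp])
qed

lemma cond_product_iff:
  assumes "\<pi> \<in> U" "measure_pmf.prob M U > 0" "finite I" "card I = Suc j"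
  shows "cond_prob M {\<pi>} U = (\<Prod>i\<in>I. cond_prob M (A i) U)
     \<longleftrightarrow> pmf M \<pi> * measure_pmf.prob M U ^ j = (\<Prod>i\<in>I. measure_pmf.prob M (A i \<inter> U))"
proof -
  let ?P = "measure_pmf.prob M"
  have lhs: "cond_prob M {\<pi>} U = pmf M \<pi> / ?P U"
    using assms(1) by (simp add: cond_prob_def measure_pmf_single)
  have rhs: "(\<Prod>i\<in>I. cond_prob M (A i) U) = (\<Prod>i\<in>I. ?P (A i \<inter> U)) / ?P U ^ Suc j"
    using assms(4) by (simp add: cond_prob_def prod_dividef)
  show ?thesis
    unfolding lhs rhs using assms(2) by (simp add: field_simps)
qed

(* The data (sigma{1:m}, sigma(m+1)) that an L-decomposable chain-rule factor depends on. *)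
definition prefix_data :: "(nat \<Rightarrow> nat) \<Rightarrow> nat \<Rightarrow> nat set \<times> nat" where
  "prefix_data \<sigma> m = (\<sigma> ` {1..m}, \<sigma> (m+1))"

definition next_prob :: "(nat \<Rightarrow> nat) pmf \<Rightarrow> nat \<Rightarrow> nat set \<times> nat \<Rightarrow> real" where
  "next_prob M m d = cond_prob M {\<rho>. \<rho> (m+1) = snd d} {\<rho>. \<rho> ` {1..m} = fst d}"

lemma next_prob_prefix_data:
  "next_prob M m (prefix_data \<sigma> m) = cond_prob M {\<rho>. \<rho> (m+1) = \<sigma> (m+1)} (set_event \<sigma> 1 m)"
  by (simp add: next_prob_def prefix_data_def set_event_def)

lemma ord_event_eq_set_event: "m \<le> 1 \<Longrightarrow> ord_event \<sigma> 1 m = set_event \<sigma> 1 m"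
  by (cases m) (auto simp: ord_event_def set_event_def)

lemma ord_event_Suc: "ord_event \<sigma> 1 (Suc m) = {\<rho>. \<rho> (m+1) = \<sigma> (m+1)} \<inter> ord_event \<sigma> 1 m"
  unfolding ord_event_def by (auto simp: le_Suc_eq)

(* L-decomposability holds for all prefix lengths m < n, not only 2 \<le> m \<le> n - 2: for m \<le> 1
   ordered and unordered prefixes coincide, and for m = n - 1 the next value is forced. *)
lemma L_decomposable_all_prefixes:
  assumes supp: "set_pmf M \<subseteq> perms n" and L: "L_decomposable n M"
    and \<sigma>: "\<sigma> \<in> perms n" and m: "m < n"
    and pos: "measure_pmf.prob M (ord_event \<sigma> 1 m) > 0"
  shows "cond_prob M {\<rho>. \<rho> (m+1) = \<sigma> (m+1)} (ord_event \<sigma> 1 m)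
       = cond_prob M {\<rho>. \<rho> (m+1) = \<sigma> (m+1)} (set_event \<sigma> 1 m)"
proof -
  let ?X = "{\<rho>. \<rho> (m+1) = \<sigma> (m+1)}" and ?O = "ord_event \<sigma> 1 m" and ?S = "set_event \<sigma> 1 m"
  let ?P = "measure_pmf.prob M"
  consider "m \<le> 1" | "m = n - 1" "2 \<le> m" | "2 \<le> m" "m \<le> n - 2"
    using m by linarith
  then show ?thesis
  proof cases
    case 1
    then show ?thesis by (simp only: ord_event_eq_set_event)
  next
    case 2
    have forced: "?S \<inter> perms n \<subseteq> ?X"
    proof
      fix \<rho> assume "\<rho> \<in> ?S \<inter> perms n"
      then have "\<rho> ` {m+1..n} = \<sigma> ` {m+1..n}"
        using perms_image_suffix[OF _ \<sigma>, of \<rho> m] by (auto simp: set_event_def)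
      then show "\<rho> \<in> ?X" using 2 m by auto
    qed
    have OS: "?O \<subseteq> ?S"
      unfolding ord_event_def set_event_def by auto
    have "?P ?O \<le> ?P ?S"
      by (rule measure_pmf.finite_measure_mono[OF OS]) simp
    then have "?P ?S > 0"
      using pos by simp
    moreover have "?P (?X \<inter> ?S) = ?P ?S" "?P (?X \<inter> ?O) = ?P ?O"
      using forced OS by (auto intro!: prob_cong_perms[OF supp])
    ultimately show ?thesis
      using pos by (simp add: cond_prob_def)
  next
    case 3
    then show ?thesis
      using L \<sigma> pos unfolding L_decomposable_def perms_def by auto
  qed
qed

lemma chain_step:
  assumes supp: "set_pmf M \<subseteq> perms n" and L: "L_decomposable n M"
    and \<sigma>: "\<sigma> \<in> perms n" and m: "m < n"
  shows "measure_pmf.prob M (ord_event \<sigma> 1 (Suc m))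
       = measure_pmf.prob M (ord_event \<sigma> 1 m) * next_prob M m (prefix_data \<sigma> m)"
proof -
  let ?X = "{\<rho>. \<rho> (m+1) = \<sigma> (m+1)}" and ?O = "ord_event \<sigma> 1 m"
  let ?P = "measure_pmf.prob M"
  show ?thesis
  proof (cases "?P ?O = 0")
    case True
    have "?P (?X \<inter> ?O) \<le> ?P ?O"
      by (rule measure_pmf.finite_measure_mono) auto
    with True have "?P (?X \<inter> ?O) = 0"
      by (simp add: antisym)
    then show ?thesis
      unfolding ord_event_Suc using True by simp
  next
    case False
    then have "?P ?O > 0"
      using measure_nonneg[of "measure_pmf M" ?O] by linarith
    then show ?thesis
      unfolding ord_event_Suc next_prob_prefix_data
      using L_decomposable_all_prefixes[OF supp L \<sigma> m]
      by (simp add: cond_prob_def field_simps)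
  qed
qed

lemma pmf_chain_rule:
  assumes supp: "set_pmf M \<subseteq> perms n" and L: "L_decomposable n M" and \<sigma>: "\<sigma> \<in> perms n"
  shows "pmf M \<sigma> = (\<Prod>m<n. next_prob M m (prefix_data \<sigma> m))"
proof -
  have prefix: "measure_pmf.prob M (ord_event \<sigma> 1 m) = (\<Prod>l<m. next_prob M l (prefix_data \<sigma> l))"
    if "m \<le> n" for m
    using that
  proof (induction m)
    case 0
    have "ord_event \<sigma> 1 0 = UNIV"
      unfolding ord_event_def by auto
    then show ?case by simp
  next
    case (Suc m)
    then show ?case
      using chain_step[OF supp L \<sigma>, of m] by simp
  qed
  have "ord_event \<sigma> 1 n \<inter> perms n = {\<sigma>} \<inter> perms n"
    using agree_all_perms[OF \<sigma>] \<sigma> by (simp add: ord_event_agree)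
  then have "measure_pmf.prob M (ord_event \<sigma> 1 n) = pmf M \<sigma>"
    using prob_cong_perms[OF supp] by (simp add: measure_pmf_single)
  then show ?thesis
    using prefix[of n] by simp
qed

lemma splice_prefix_data:
  assumes a: "1 \<le> a" and head: "\<sigma> ` {1..a-1} = \<tau> ` {1..a-1}" and block: "\<sigma> ` {a..b} = \<tau> ` {a..b}"
  defines "\<sigma>' \<equiv> splice {a..b} \<sigma> \<tau>" and "\<tau>' \<equiv> splice {a..b} \<tau> \<sigma>"
  shows "prefix_data \<sigma>' m = prefix_data \<sigma> m \<and> prefix_data \<tau>' m = prefix_data \<tau> m
       \<or> prefix_data \<sigma>' m = prefix_data \<tau> m \<and> prefix_data \<tau>' m = prefix_data \<sigma> m"
proof -
  consider "m + 1 < a" | "a \<le> m + 1" "m + 1 \<le> b" | "b < m + 1"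
    by linarith
  then show ?thesis
  proof cases
    case 1
    then have disj: "{1..m} \<inter> {a..b} = {}" and next_out: "m + 1 \<notin> {a..b}"
      by auto
    have "\<sigma>' ` {1..m} = \<sigma> ` {1..m}" "\<tau>' ` {1..m} = \<tau> ` {1..m}"
      unfolding \<sigma>'_def \<tau>'_def by (simp_all only: splice_image_disjoint[OF disj])
    moreover have "\<sigma>' (m+1) = \<sigma> (m+1)" "\<tau>' (m+1) = \<tau> (m+1)"
      unfolding \<sigma>'_def \<tau>'_def using next_out by (auto simp: splice_apply)
    ultimately show ?thesis by (simp add: prefix_data_def)
  next
    case 2
    have split: "{1..m} = {1..a-1} \<union> {a..m}"
      using 2 a by auto
    have disj: "{1..a-1} \<inter> {a..b} = {}" and sub: "{a..m} \<subseteq> {a..b}" and next_in: "m + 1 \<in> {a..b}"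
      using 2 by auto
    have "\<sigma>' ` {1..m} = \<tau> ` {1..m}" "\<tau>' ` {1..m} = \<sigma> ` {1..m}"
      unfolding \<sigma>'_def \<tau>'_def split image_Un splice_image_disjoint[OF disj] splice_image_subset[OF sub]
      using head by simp_all
    moreover have "\<sigma>' (m+1) = \<tau> (m+1)" "\<tau>' (m+1) = \<sigma> (m+1)"
      unfolding \<sigma>'_def \<tau>'_def using next_in by (auto simp: splice_apply)
    ultimately show ?thesis by (simp add: prefix_data_def)
  next
    case 3
    then have sup: "{a..b} \<subseteq> {1..m}" and next_out: "m + 1 \<notin> {a..b}"
      using a by auto
    have "\<sigma>' ` {1..m} = \<sigma> ` {1..m}" "\<tau>' ` {1..m} = \<tau> ` {1..m}"
      unfolding \<sigma>'_def \<tau>'_def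
      using splice_image_superset[OF sup block] splice_image_superset[OF sup block[symmetric]] by simp_all
    moreover have "\<sigma>' (m+1) = \<sigma> (m+1)" "\<tau>' (m+1) = \<tau> (m+1)"
      unfolding \<sigma>'_def \<tau>'_def using next_out by (auto simp: splice_apply)
    ultimately show ?thesis by (simp add: prefix_data_def)
  qed
qed

lemma prefix_product_splice:
  fixes c :: "nat \<Rightarrow> nat set \<times> nat \<Rightarrow> real"
  assumes "1 \<le> a" "\<sigma> ` {1..a-1} = \<tau> ` {1..a-1}" "\<sigma> ` {a..b} = \<tau> ` {a..b}"
  shows "(\<Prod>m<n. c m (prefix_data \<sigma> m)) * (\<Prod>m<n. c m (prefix_data \<tau> m))
       = (\<Prod>m<n. c m (prefix_data (splice {a..b} \<sigma> \<tau>) m))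
         * (\<Prod>m<n. c m (prefix_data (splice {a..b} \<tau> \<sigma>) m))"
proof -
  have "c m (prefix_data \<sigma> m) * c m (prefix_data \<tau> m)
      = c m (prefix_data (splice {a..b} \<sigma> \<tau>) m) * c m (prefix_data (splice {a..b} \<tau> \<sigma>) m)" for m
    using splice_prefix_data[OF assms, of m] by auto
  then show ?thesis
    by (simp add: prod.distrib[symmetric])
qed

lemma pmf_splice_swap:
  assumes supp: "set_pmf M \<subseteq> perms n" and L: "L_decomposable n M"
    and perms: "\<sigma> \<in> perms n" "\<tau> \<in> perms n" and ab: "1 \<le> a" "b \<le> n"
    and head: "\<sigma> ` {1..a-1} = \<tau> ` {1..a-1}" and block: "\<sigma> ` {a..b} = \<tau> ` {a..b}"
  shows "pmf M \<sigma> * pmf M \<tau> = pmf M (splice {a..b} \<sigma> \<tau>) * pmf M (splice {a..b} \<tau> \<sigma>)"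
proof -
  have "{a..b} \<subseteq> {1..n}"
    using ab by auto
  then have "splice {a..b} \<sigma> \<tau> \<in> perms n" "splice {a..b} \<tau> \<sigma> \<in> perms n"
    using splice_perms perms block by auto
  then show ?thesis
    using prefix_product_splice[OF ab(1) head block, of "next_prob M" n]
    by (simp add: pmf_chain_rule[OF supp L] perms)
qed

definition block :: "(nat \<Rightarrow> nat) \<Rightarrow> nat \<Rightarrow> nat set" where
  "block \<kappa> i = {\<kappa> (i - 1) + 1..\<kappa> i}"

lemma ord_event_block: "ord_event \<pi> (\<kappa> (i - 1) + 1) (\<kappa> i) = agree (block \<kappa> i) \<pi>"
  by (simp add: ord_event_agree block_def)

lemma unord_marg_event_iff:
  "\<sigma> \<in> unord_marg_event j \<kappa> \<pi> \<longleftrightarrow> (\<forall>i\<in>{1..Suc j}. \<sigma> ` block \<kappa> i = \<pi> ` block \<kappa> i)"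
  unfolding unord_marg_event_def set_event_def block_def by auto

lemma unord_marg_event_eq:
  "\<sigma> \<in> unord_marg_event j \<kappa> \<pi> \<Longrightarrow> unord_marg_event j \<kappa> \<sigma> = unord_marg_event j \<kappa> \<pi>"
  unfolding set_eq_iff unord_marg_event_iff by auto

context
  fixes n j :: nat and \<kappa> :: "nat \<Rightarrow> nat"
  assumes sections: "consec_sections n j \<kappa>"
begin

lemma sections_mono: "l \<le> i \<Longrightarrow> i \<le> Suc j \<Longrightarrow> \<kappa> l \<le> \<kappa> i"
proof (induction i)
  case 0
  then show ?case by simp
next
  case (Suc i)
  then show ?case
    using sections unfolding consec_sections_def by (cases "l = Suc i") (auto simp: less_imp_le)
qed

lemma sections_le: "i \<le> Suc j \<Longrightarrow> \<kappa> i \<le> n"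
  using sections_mono[of i "Suc j"] sections unfolding consec_sections_def by simp

lemma block_subset: "i \<le> Suc j \<Longrightarrow> block \<kappa> i \<subseteq> {1..n}"
  using sections_le unfolding block_def by auto

lemma blocks_disjoint:
  assumes "i \<in> {1..Suc j}" "l \<in> {1..Suc j}" "i \<noteq> l"
  shows "block \<kappa> i \<inter> block \<kappa> l = {}"
proof -
  have ordered: "block \<kappa> i \<inter> block \<kappa> l = {}" if "i < l" "l \<le> Suc j" for i l
  proof -
    have "\<kappa> i \<le> \<kappa> (l - 1)"
      using sections_mono[of i "l - 1"] that by simp
    then show ?thesis
      unfolding block_def by auto
  qed
  then show ?thesis
    using assms ordered[of i l] ordered[of l i] by (cases "i < l") (auto simp: Int_commute)
qed

lemma prefix_split: "l \<le> j \<Longrightarrow> {1..\<kappa> (Suc l)} = {1..\<kappa> l} \<union> block \<kappa> (Suc l)"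
  using sections_mono[of l "Suc l"] unfolding block_def by auto

lemma unord_prefix_image:
  "\<sigma> \<in> unord_marg_event j \<kappa> \<pi> \<Longrightarrow> l \<le> Suc j \<Longrightarrow> \<sigma> ` {1..\<kappa> l} = \<pi> ` {1..\<kappa> l}"
proof (induction l)
  case 0
  then show ?case
    using sections unfolding consec_sections_def by simp
next
  case (Suc l)
  then show ?case
    using prefix_split[of l] unord_marg_event_iff[of \<sigma> j \<kappa> \<pi>] by (simp add: image_Un)
qed

lemma splice_block_unord:
  assumes "\<sigma> \<in> unord_marg_event j \<kappa> \<pi>" "\<tau> \<in> unord_marg_event j \<kappa> \<pi>" "i \<in> {1..Suc j}"
  shows "splice (block \<kappa> i) \<sigma> \<tau> \<in> unord_marg_event j \<kappa> \<pi>"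
  unfolding unord_marg_event_iff
proof
  fix l assume l: "l \<in> {1..Suc j}"
  show "splice (block \<kappa> i) \<sigma> \<tau> ` block \<kappa> l = \<pi> ` block \<kappa> l"
  proof (cases "l = i")
    case True
    then show ?thesis
      using assms l by (simp add: splice_image_subset unord_marg_event_iff)
  next
    case False
    then show ?thesis
      using assms l blocks_disjoint[OF l assms(3)] by (simp add: splice_image_disjoint unord_marg_event_iff)
  qed
qed

end

(* Given the unordered marginals, the ordered prefix before block l + 1 and the ordered block
   l + 1 are independent under an L-decomposable distribution: exchanging that block between two
   permutations with the same unordered marginals is allowed (pmf_splice_swap). *)
lemma prefix_block_independent:
  fixes \<pi> :: "nat \<Rightarrow> nat"
  assumes supp: "set_pmf M \<subseteq> perms n" and L: "L_decomposable n M"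
    and sections: "consec_sections n j \<kappa>" and l: "l \<le> j"
  defines "U \<equiv> unord_marg_event j \<kappa> \<pi>" and "I \<equiv> {1..\<kappa> l}" and "B \<equiv> block \<kappa> (Suc l)"
  shows "measure_pmf.prob M (agree I \<pi> \<inter> agree B \<pi> \<inter> U) * measure_pmf.prob M U
       = measure_pmf.prob M (agree I \<pi> \<inter> U) * measure_pmf.prob M (agree B \<pi> \<inter> U)"
proof (rule prob_splice_independent[OF supp])
  have B_interval: "B = {\<kappa> l + 1..\<kappa> (Suc l)}" and i: "Suc l \<in> {1..Suc j}"
    using l by (auto simp: B_def block_def)
  have in_U: "\<sigma> ` I = \<pi> ` I \<and> \<sigma> ` B = \<pi> ` B" if "\<sigma> \<in> U" for \<sigma>
    using that unord_prefix_image[OF sections, of \<sigma> \<pi> l] unord_marg_event_iff[of \<sigma> j \<kappa> \<pi>] i l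
    unfolding U_def I_def B_def by auto
  fix \<sigma> \<tau> assume \<sigma>: "\<sigma> \<in> U \<inter> perms n" and \<tau>: "\<tau> \<in> U \<inter> perms n"
  show "splice B \<sigma> \<tau> \<in> U \<inter> perms n"
    using splice_block_unord[OF sections _ _ i] splice_perms[OF _ _ block_subset[OF sections]]
      in_U \<sigma> \<tau> i unfolding U_def B_def by auto
  show "pmf M \<sigma> * pmf M \<tau> = pmf M (splice B \<sigma> \<tau>) * pmf M (splice B \<tau> \<sigma>)"
    unfolding B_interval
    by (rule pmf_splice_swap[OF supp L])
       (use \<sigma> \<tau> in_U sections_le[OF sections] l in \<open>auto simp: I_def B_interval\<close>)
next
  fix \<sigma> \<tau> :: "nat \<Rightarrow> nat"
  show "\<sigma> \<in> agree I \<pi> \<Longrightarrow> \<forall>x. x \<notin> B \<longrightarrow> \<tau> x = \<sigma> x \<Longrightarrow> \<tau> \<in> agree I \<pi>"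
    by (auto simp: agree_def I_def B_def block_def)
  show "\<sigma> \<in> agree B \<pi> \<Longrightarrow> \<forall>x\<in>B. \<tau> x = \<sigma> x \<Longrightarrow> \<tau> \<in> agree B \<pi>"
    by (auto simp: agree_def)
qed

lemma prefix_mass_factorization:
  fixes \<pi> :: "nat \<Rightarrow> nat"
  assumes supp: "set_pmf M \<subseteq> perms n" and L: "L_decomposable n M"
    and sections: "consec_sections n j \<kappa>" and N: "N \<le> j"
  defines "U \<equiv> unord_marg_event j \<kappa> \<pi>"
  shows "measure_pmf.prob M (agree {1..\<kappa> (Suc N)} \<pi> \<inter> U) * measure_pmf.prob M U ^ N
       = (\<Prod>i\<in>{1..Suc N}. measure_pmf.prob M (agree (block \<kappa> i) \<pi> \<inter> U))"
  using N
proof (induction N)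
  case 0
  have "block \<kappa> 1 = {1..\<kappa> 1}"
    using sections unfolding consec_sections_def block_def by simp
  then show ?case by simp
next
  case (Suc N)
  let ?P = "measure_pmf.prob M"
  let ?I = "{1..\<kappa> (Suc N)}" and ?B = "block \<kappa> (Suc (Suc N))"
  have "?P (agree {1..\<kappa> (Suc (Suc N))} \<pi> \<inter> U) * ?P U ^ Suc N
      = (?P (agree ?I \<pi> \<inter> agree ?B \<pi> \<inter> U) * ?P U) * ?P U ^ N"
    using prefix_split[OF sections, of "Suc N"] Suc.prems by (simp add: agree_Un)
  also have "\<dots> = (?P (agree ?I \<pi> \<inter> U) * ?P U ^ N) * ?P (agree ?B \<pi> \<inter> U)"
    using prefix_block_independent[OF supp L sections Suc.prems, of \<pi>] unfolding U_def by simp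
  also have "\<dots> = (\<Prod>i\<in>{1..Suc (Suc N)}. ?P (agree (block \<kappa> i) \<pi> \<inter> U))"
    using Suc by (simp add: atLeastAtMostSuc_conv)
  finally show ?case .
qed

definition marginals_cond_indep :: "nat \<Rightarrow> (nat \<Rightarrow> nat) pmf \<Rightarrow> bool" where
  "marginals_cond_indep n M \<longleftrightarrow>
    (\<forall>j \<kappa> \<pi>. consec_sections n j \<kappa> \<and> \<pi> permutes {1..n}
       \<and> measure_pmf.prob M (unord_marg_event j \<kappa> \<pi>) > 0 \<longrightarrow>
       cond_prob M {\<pi>} (unord_marg_event j \<kappa> \<pi>)
       = (\<Prod>i\<in>{1..Suc j}. cond_prob M (ord_event \<pi> (\<kappa> (i - 1) + 1) (\<kappa> i))
                                        (unord_marg_event j \<kappa> \<pi>)))"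

lemma marginals_cond_indep_if_L_decomposable:
  assumes supp: "set_pmf M \<subseteq> perms n" and L: "L_decomposable n M"
  shows "marginals_cond_indep n M"
  unfolding marginals_cond_indep_def
proof (intro allI impI, elim conjE)
  fix j \<kappa> \<pi>
  assume sections: "consec_sections n j \<kappa>" and "\<pi> permutes {1..n}"
    and pos: "measure_pmf.prob M (unord_marg_event j \<kappa> \<pi>) > 0"
  then have \<pi>: "\<pi> \<in> perms n"
    by (simp add: perms_def)
  let ?U = "unord_marg_event j \<kappa> \<pi>" and ?P = "measure_pmf.prob M"
  have \<pi>_U: "\<pi> \<in> ?U"
    by (simp add: unord_marg_event_iff)
  have "agree {1..n} \<pi> \<inter> ?U \<inter> perms n = {\<pi>} \<inter> perms n"
    using agree_all_perms[OF \<pi>] \<pi>_U by auto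
  then have "?P (agree {1..n} \<pi> \<inter> ?U) = pmf M \<pi>"
    using prob_cong_perms[OF supp] by (simp add: measure_pmf_single)
  then have "pmf M \<pi> * ?P ?U ^ j = (\<Prod>i\<in>{1..Suc j}. ?P (agree (block \<kappa> i) \<pi> \<inter> ?U))"
    using prefix_mass_factorization[OF supp L sections, of j \<pi>] sections
    unfolding consec_sections_def by simp
  then show "cond_prob M {\<pi>} ?U
      = (\<Prod>i\<in>{1..Suc j}. cond_prob M (ord_event \<pi> (\<kappa> (i - 1) + 1) (\<kappa> i)) ?U)"
    unfolding ord_event_block by (subst cond_product_iff[OF \<pi>_U pos]) simp_all
qed

definition two_blocks :: "nat \<Rightarrow> nat \<Rightarrow> nat \<Rightarrow> nat" where
  "two_blocks k n i = (if i = 0 then 0 else if i = 1 then k else n)"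

lemma two_blocks_sections: "0 < k \<Longrightarrow> k < n \<Longrightarrow> consec_sections n 1 (two_blocks k n)"
  unfolding consec_sections_def two_blocks_def by auto

lemma two_blocks_blocks: "block (two_blocks k n) 1 = {1..k}" "block (two_blocks k n) 2 = {k+1..n}"
  unfolding block_def two_blocks_def by auto

lemma unord_two_blocks_iff:
  assumes "\<rho> \<in> perms n" "\<sigma> \<in> perms n"
  shows "\<rho> \<in> unord_marg_event 1 (two_blocks k n) \<sigma> \<longleftrightarrow> \<rho> ` {1..k} = \<sigma> ` {1..k}"
proof -
  have "{1..Suc 1} = {1::nat, 2}"
    by auto
  moreover have "\<rho> ` {1..k} = \<sigma> ` {1..k} \<Longrightarrow> \<rho> ` {k+1..n} = \<sigma> ` {k+1..n}"
    by (rule perms_image_suffix[OF assms])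
  ultimately show ?thesis
    unfolding unord_marg_event_iff using two_blocks_blocks by auto
qed

lemma set_event_splice_closed:
  assumes "\<sigma> \<in> set_event \<pi> 1 k \<inter> perms n" "\<tau> \<in> set_event \<pi> 1 k \<inter> perms n"
  shows "splice {k+1..n} \<sigma> \<tau> \<in> set_event \<pi> 1 k \<inter> perms n"
proof -
  have "\<sigma> ` {k+1..n} = \<tau> ` {k+1..n}"
    using assms perms_image_suffix[of \<sigma> n \<tau> k] by (auto simp: set_event_def)
  moreover have "{1..k} \<inter> {k+1..n} = {}"
    by auto
  ultimately show ?thesis
    using assms splice_perms[of \<sigma> n \<tau> "{k+1..n}"] splice_image_disjoint[of "{1..k}" "{k+1..n}" \<sigma> \<tau>]
    by (auto simp: set_event_def)
qed

(* The two-block factorization makes the pmf, on the event Pi{1:k} = pi{1:k}, a product of a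
   factor determined by the first block and one determined by the second, hence gives the
   exchange identity for the block {k+1..n}. *)
lemma two_blocks_exchange:
  assumes supp: "set_pmf M \<subseteq> perms n" and indep: "marginals_cond_indep n M"
    and k: "0 < k" "k < n" and \<pi>: "\<pi> \<in> perms n"
    and pos: "measure_pmf.prob M (set_event \<pi> 1 k) > 0"
    and \<sigma>: "\<sigma> \<in> set_event \<pi> 1 k \<inter> perms n" and \<tau>: "\<tau> \<in> set_event \<pi> 1 k \<inter> perms n"
  shows "pmf M \<sigma> * pmf M \<tau> = pmf M (splice {k+1..n} \<sigma> \<tau>) * pmf M (splice {k+1..n} \<tau> \<sigma>)"
proof -
  let ?\<kappa> = "two_blocks k n" and ?P = "measure_pmf.prob M"
  let ?U = "unord_marg_event 1 ?\<kappa> \<pi>" and ?S = "set_event \<pi> 1 k"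
  have "\<rho> \<in> ?U \<longleftrightarrow> \<rho> \<in> ?S" if "\<rho> \<in> perms n" for \<rho>
    using unord_two_blocks_iff[OF that \<pi>] unfolding set_event_def by simp
  then have US: "?U \<inter> perms n = ?S \<inter> perms n"
    by blast
  then have pos_U: "?P ?U > 0"
    using pos prob_cong_perms[OF supp US] by simp
  have product: "pmf M \<rho> * ?P ?U = ?P (agree {1..k} \<rho> \<inter> ?U) * ?P (agree {k+1..n} \<rho> \<inter> ?U)"
    if \<rho>: "\<rho> \<in> ?S \<inter> perms n" for \<rho>
  proof -
    have "\<rho> \<in> ?U"
      using \<rho> US by blast
    then have U\<rho>: "unord_marg_event 1 ?\<kappa> \<rho> = ?U"
      by (rule unord_marg_event_eq)
    have "cond_prob M {\<rho>} ?U = (\<Prod>i\<in>{1..Suc 1}. cond_prob M (agree (block ?\<kappa> i) \<rho>) ?U)"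
      using indep[unfolded marginals_cond_indep_def, rule_format, of 1 ?\<kappa> \<rho>]
        two_blocks_sections[OF k] \<rho> pos_U
      unfolding U\<rho> ord_event_block perms_def by simp
    then have "pmf M \<rho> * ?P ?U ^ 1 = (\<Prod>i\<in>{1..Suc 1}. ?P (agree (block ?\<kappa> i) \<rho> \<inter> ?U))"
      using \<open>\<rho> \<in> ?U\<close> pos_U by (subst (asm) cond_product_iff) auto
    also have "{1..Suc 1} = {1::nat, 2}"
      by auto
    finally show ?thesis
      by (simp add: two_blocks_blocks[simplified])
  qed
  show ?thesis
    by (rule product_form_swap[OF _ set_event_splice_closed product _ _ \<sigma> \<tau>])
       (use pos_U in \<open>simp_all add: agree_splice_outside agree_splice_inside\<close>)
qed

(* Backward direction: on the event Pi{1:k} = pi{1:k} the exchange identity for {k+1..n}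
   makes Pi(1:k) and Pi(k+1) independent, which is the L-decomposability condition at k. *)
lemma L_decomposable_if_marginals_cond_indep:
  assumes supp: "set_pmf M \<subseteq> perms n" and indep: "marginals_cond_indep n M"
  shows "L_decomposable n M"
  unfolding L_decomposable_def
proof (intro allI impI, elim conjE)
  fix k \<pi> assume k: "2 \<le> k" "k \<le> n - 2" and "\<pi> permutes {1..n}"
    and pos_O: "measure_pmf.prob M (ord_event \<pi> 1 k) > 0"
  then have \<pi>: "\<pi> \<in> perms n"
    by (simp add: perms_def)
  let ?P = "measure_pmf.prob M" and ?S = "set_event \<pi> 1 k" and ?O = "ord_event \<pi> 1 k"
  let ?X = "{\<sigma>. \<sigma> (k+1) = \<pi> (k+1)}"
  have OS: "?O \<subseteq> ?S"
    unfolding ord_event_def set_event_def by auto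
  have "?P ?O \<le> ?P ?S"
    by (rule measure_pmf.finite_measure_mono[OF OS]) simp
  then have pos_S: "?P ?S > 0"
    using pos_O by simp
  have "?P (?O \<inter> ?X \<inter> ?S) * ?P ?S = ?P (?O \<inter> ?S) * ?P (?X \<inter> ?S)"
  proof (rule prob_splice_independent[OF supp set_event_splice_closed])
    show "pmf M \<sigma> * pmf M \<tau> = pmf M (splice {k+1..n} \<sigma> \<tau>) * pmf M (splice {k+1..n} \<tau> \<sigma>)"
      if "\<sigma> \<in> ?S \<inter> perms n" "\<tau> \<in> ?S \<inter> perms n" for \<sigma> \<tau>
      using two_blocks_exchange[OF supp indep _ _ \<pi> pos_S that] k by simp
    show "\<tau> \<in> ?O" if "\<sigma> \<in> ?O" "\<forall>x. x \<notin> {k+1..n} \<longrightarrow> \<tau> x = \<sigma> x" for \<sigma> \<tau>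
      using that by (auto simp: ord_event_def)
    show "\<tau> \<in> ?X" if "\<sigma> \<in> ?X" "\<forall>x\<in>{k+1..n}. \<tau> x = \<sigma> x" for \<sigma> \<tau>
      using that k by auto
  qed
  moreover have "?O \<inter> ?X \<inter> ?S = ?X \<inter> ?O" "?O \<inter> ?S = ?O"
    using OS by auto
  ultimately show "cond_prob M ?X ?O = cond_prob M ?X ?S"
    using pos_O pos_S by (simp add: cond_prob_def field_simps)
qed

theorem proposition2:
  fixes n :: nat and M :: "(nat \<Rightarrow> nat) pmf"
  assumes "set_pmf M \<subseteq> {\<pi>. \<pi> permutes {1..n}}"
  shows "L_decomposable n M \<longleftrightarrow>
    (\<forall>j \<kappa> \<pi>. consec_sections n j \<kappa> \<and> \<pi> permutes {1..n}
       \<and> measure_pmf.prob M (unord_marg_event j \<kappa> \<pi>) > 0 \<longrightarrow>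
       cond_prob M {\<pi>} (unord_marg_event j \<kappa> \<pi>)
       = (\<Prod>i\<in>{1..Suc j}. cond_prob M (ord_event \<pi> (\<kappa> (i - 1) + 1) (\<kappa> i))
                                        (unord_marg_event j \<kappa> \<pi>)))"
proof -
  have supp: "set_pmf M \<subseteq> perms n"
    using assms unfolding perms_def .
  have "L_decomposable n M \<longleftrightarrow> marginals_cond_indep n M"
    using marginals_cond_indep_if_L_decomposable[OF supp]
      L_decomposable_if_marginals_cond_indep[OF supp] by blast
  then show ?thesis
    unfolding marginals_cond_indep_def .
qed

end
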